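(* Let $a<b$ and let $X$ be a random variable taking values in $[a,b]$, with probability density function $f:[a,b]\rightarrow[0,1]$ and cumulative distribution function $F(x)=\Pr(X\le x)=\int_a^x f(t)\,dt$. Assume that $F$ is differentiable in $(a,b)$ with $F'=f\in L^1[a,b]$ and that $\gamma\le f(t)\le\Gamma$ for all $t\in[a,b]$, where $\gamma,\Gamma$ are real constants. Then \[ \left|\frac{1}{2}\left[F\left(\frac{3a+b}{4}\right)+F\left(\frac{a+3b}{4}\right)\right]-\frac{b-E(X)}{b-a}\right|\leq \frac{b-a}{4} \left(\frac{1}{b-a}-\gamma\right) \] and \[ \left|\frac{1}{2}\left[F\left(\frac{3a+b}{4}\right)+F\left(\frac{a+3b}{4}\right)\right]-\frac{b-E(X)}{b-a}\right|\leq \frac{b-a}{4} \left(\Gamma-\frac{1}{b-a}\right), \] where $E(X)$ is the expectation of $X$. *)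

theory Defs
  imports "HOL-Probability.Probability"
begin

definition CDF :: "'a measure \<Rightarrow> ('a \<Rightarrow> real) \<Rightarrow> real \<Rightarrow> real" where
  "CDF M X x = measure M {\<omega> \<in> space M. X \<omega> \<le> x}"

end

theory Submission imports Defs begin

text \<open>Since \<open>E(X) = b - \<integral>\<^sub>a\<^sup>b F\<close>, the left-hand side is the error of the composite midpoint rule
  with two panels, applied to \<open>F\<close> and divided by \<open>b - a\<close>. For a monotone function that error is at
  most a quarter of the length times the total increase, and the rule is exact on linear
  functions. The bounds \<open>\<gamma> \<le> f \<le> \<Gamma>\<close> make \<open>F t - \<gamma> t\<close> and \<open>\<Gamma> t - F t\<close> nondecreasing, and applying the
  monotone estimate to them gives the two inequalities.\<close>

lemma midpoint_rule_error_mono: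
  fixes g :: "real \<Rightarrow> real"
  assumes "x \<le> y" and mono: "mono_on {x..y} g"
  shows "\<bar>(y - x) * g ((x + y) / 2) - integral {x..y} g\<bar> \<le> (y - x) / 2 * (g y - g x)"
proof -
  define p where "p = (x + y) / 2"
  define h where "h = (y - x) / 2"
  have p: "x \<le> p" "p \<le> y" "p - x = h" "y - p = h"
    using \<open>x \<le> y\<close> by (auto simp: p_def h_def field_simps)
  have bounds: "(v - u) * g u \<le> integral {u..v} g \<and> integral {u..v} g \<le> (v - u) * g v"
    if "x \<le> u" "u \<le> v" "v \<le> y" for u v
  proof -
    have int: "g integrable_on {u..v}"
      by (rule integrable_on_mono_on) (use mono_on_subset[OF mono] that in auto)
    have "integral {u..v} (\<lambda>_. g u) \<le> integral {u..v} g"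
      by (rule integral_le) (use int that in \<open>auto intro: mono_onD[OF mono]\<close>)
    moreover have "integral {u..v} g \<le> integral {u..v} (\<lambda>_. g v)"
      by (rule integral_le) (use int that in \<open>auto intro: mono_onD[OF mono]\<close>)
    ultimately show ?thesis using that by simp
  qed
  have split: "integral {x..y} g = integral {x..p} g + integral {p..y} g"
    using Henstock_Kurzweil_Integration.integral_combine[OF p(1,2) integrable_on_mono_on[OF mono]] by simp
  have "g x \<le> g p" "g p \<le> g y"
    using p \<open>x \<le> y\<close> by (auto intro: mono_onD[OF mono])
  moreover have "0 \<le> h" using \<open>x \<le> y\<close> by (simp add: h_def)
  ultimately have "h * g x \<le> h * g p" "h * g p \<le> h * g y"
    by (simp_all add: mult_left_mono)
  moreover have "(y - x) * g p = 2 * (h * g p)" "(y - x) / 2 * (g y - g x) = h * g y - h * g x"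
    by (simp_all add: h_def field_simps)
  ultimately show ?thesis
    using bounds[of x p, unfolded p(3)] bounds[of p y, unfolded p(4)] p(1,2) split
    unfolding p_def[symmetric] abs_le_iff by linarith
qed

lemma composite_midpoint_rule_error_mono:
  fixes g :: "real \<Rightarrow> real"
  assumes "a \<le> b" and mono: "mono_on {a..b} g"
  shows "\<bar>(b - a) / 2 * (g ((3*a + b) / 4) + g ((a + 3*b) / 4)) - integral {a..b} g\<bar>
           \<le> (b - a) / 4 * (g b - g a)"
proof -
  define m where "m = (a + b) / 2"
  have m: "a \<le> m" "m \<le> b" using \<open>a \<le> b\<close> by (auto simp: m_def)
  have nodes: "(a + m) / 2 = (3*a + b) / 4" "(m + b) / 2 = (a + 3*b) / 4"
    and lengths: "m - a = (b - a) / 2" "b - m = (b - a) / 2"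
    by (simp_all add: m_def field_simps)
  have left: "\<bar>(b - a) / 2 * g ((3*a + b) / 4) - integral {a..m} g\<bar> \<le> (b - a) / 4 * (g m - g a)"
    using midpoint_rule_error_mono[of a m g, unfolded nodes lengths] m mono_on_subset[OF mono]
    by simp
  have right: "\<bar>(b - a) / 2 * g ((a + 3*b) / 4) - integral {m..b} g\<bar> \<le> (b - a) / 4 * (g b - g m)"
    using midpoint_rule_error_mono[of m b g, unfolded nodes lengths] m mono_on_subset[OF mono]
    by simp
  have "integral {a..b} g = integral {a..m} g + integral {m..b} g"
    using Henstock_Kurzweil_Integration.integral_combine[OF m integrable_on_mono_on[OF mono]] by simp
  then show ?thesis
    using left right unfolding abs_le_iff by (simp add: algebra_simps)
qed

lemma composite_midpoint_rule_exact_linear: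
  fixes a b K :: real
  assumes "a \<le> b"
  shows "(b - a) / 2 * (K * ((3*a + b) / 4) + K * ((a + 3*b) / 4)) = integral {a..b} (\<lambda>t. K * t)"
  using assms by (simp add: power2_eq_square field_simps)

lemma composite_midpoint_rule_error_slope_bounds:
  fixes F :: "real \<Rightarrow> real"
  assumes "a \<le> b" and cont: "continuous_on {a..b} F"
    and slope: "\<And>x y. a \<le> x \<Longrightarrow> x \<le> y \<Longrightarrow> y \<le> b \<Longrightarrow>
                  \<gamma> * (y - x) \<le> F y - F x \<and> F y - F x \<le> \<Gamma> * (y - x)"
  defines "E \<equiv> (b - a) / 2 * (F ((3*a + b) / 4) + F ((a + 3*b) / 4)) - integral {a..b} F"
  shows "\<bar>E\<bar> \<le> (b - a) / 4 * (F b - F a - \<gamma> * (b - a))"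
    and "\<bar>E\<bar> \<le> (b - a) / 4 * (\<Gamma> * (b - a) - (F b - F a))"
proof -
  define c d where "c = (3*a + b) / 4" and "d = (a + 3*b) / 4"
  have int_F: "F integrable_on {a..b}" using cont integrable_continuous_real by blast
  have int_lin: "(\<lambda>t. K * t) integrable_on {a..b}" for K :: real
    by (intro integrable_continuous_real continuous_intros)
  have lin: "integral {a..b} (\<lambda>t. K * t) = (b - a) / 2 * (K * c + K * d)" for K
    unfolding c_def d_def using composite_midpoint_rule_exact_linear[OF \<open>a \<le> b\<close>] by simp
  have mono_lower: "mono_on {a..b} (\<lambda>t. F t - \<gamma> * t)"
    and mono_upper: "mono_on {a..b} (\<lambda>t. \<Gamma> * t - F t)"
    by (auto intro!: mono_onI simp: algebra_simps dest!: slope)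
  have err_lower: "(b - a) / 2 * ((F c - \<gamma> * c) + (F d - \<gamma> * d)) - integral {a..b} (\<lambda>t. F t - \<gamma> * t) = E"
    unfolding E_def c_def[symmetric] d_def[symmetric] integral_diff[OF int_F int_lin] lin
    by (simp add: algebra_simps)
  show "\<bar>E\<bar> \<le> (b - a) / 4 * (F b - F a - \<gamma> * (b - a))"
    using composite_midpoint_rule_error_mono[OF \<open>a \<le> b\<close> mono_lower,
        unfolded c_def[symmetric] d_def[symmetric] err_lower]
    by (simp add: algebra_simps)
  have err_upper: "(b - a) / 2 * ((\<Gamma> * c - F c) + (\<Gamma> * d - F d)) - integral {a..b} (\<lambda>t. \<Gamma> * t - F t) = - E"
    unfolding E_def c_def[symmetric] d_def[symmetric] integral_diff[OF int_lin int_F] lin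
    by (simp add: algebra_simps)
  show "\<bar>E\<bar> \<le> (b - a) / 4 * (\<Gamma> * (b - a) - (F b - F a))"
    using composite_midpoint_rule_error_mono[OF \<open>a \<le> b\<close> mono_upper,
        unfolded c_def[symmetric] d_def[symmetric] err_upper abs_minus_cancel]
    by (simp add: algebra_simps)
qed

lemma indefinite_integral_slope_bounds:
  fixes f :: "real \<Rightarrow> real"
  assumes int: "f integrable_on {a..b}"
    and bounds: "\<forall>t\<in>{a..b}. \<gamma> \<le> f t \<and> f t \<le> \<Gamma>"
    and "a \<le> x" "x \<le> y" "y \<le> b"
  shows "\<gamma> * (y - x) \<le> integral {a..y} f - integral {a..x} f
    \<and> integral {a..y} f - integral {a..x} f \<le> \<Gamma> * (y - x)"
proof -
  have int_xy: "f integrable_on {x..y}"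
    by (rule integrable_on_subinterval[OF int]) (use assms in auto)
  have "f integrable_on {a..y}"
    by (rule integrable_on_subinterval[OF int]) (use assms in auto)
  then have "integral {a..y} f - integral {a..x} f = integral {x..y} f"
    using Henstock_Kurzweil_Integration.integral_combine[of a x y f] assms by simp
  moreover have "integral {x..y} (\<lambda>_. \<gamma>) \<le> integral {x..y} f"
    by (rule integral_le) (use int_xy bounds assms in auto)
  moreover have "integral {x..y} f \<le> integral {x..y} (\<lambda>_. \<Gamma>)"
    by (rule integral_le) (use int_xy bounds assms in auto)
  ultimately show ?thesis using \<open>x \<le> y\<close> by (simp add: mult.commute)
qed

lemma CDF_eq_1:
  assumes "prob_space M" and "\<forall>\<omega>\<in>space M. X \<omega> \<le> b"
  shows "CDF M X b = 1"
proof -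
  have "{\<omega> \<in> space M. X \<omega> \<le> b} = space M" using assms(2) by auto
  then show ?thesis unfolding CDF_def using prob_space.prob_space[OF assms(1)] by simp
qed

lemma expectation_eq_integral_density:
  fixes X :: "'a \<Rightarrow> real" and f :: "real \<Rightarrow> real"
  assumes "prob_space M" and X: "X \<in> borel_measurable M" "\<forall>\<omega>\<in>space M. X \<omega> \<in> {a..b}"
    and dist: "distributed M lborel X (\<lambda>x. ennreal (indicator {a..b} x * f x))"
    and nonneg: "\<forall>t\<in>{a..b}. 0 \<le> f t"
  shows "(\<integral>\<omega>. X \<omega> \<partial>M) = integral {a..b} (\<lambda>x. x * f x)"
proof -
  interpret prob_space M by fact
  define \<delta> where "\<delta> x = indicator {a..b} x * f x" for x
  have dist': "distributed M lborel X (\<lambda>x. ennreal (\<delta> x))" using dist unfolding \<delta>_def .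
  have \<delta>_nonneg: "0 \<le> \<delta> x" for x using nonneg unfolding \<delta>_def indicator_def by auto
  have "integrable M X"
    by (rule integrable_const_bound[where B="max \<bar>a\<bar> \<bar>b\<bar>"]) (use X in \<open>auto intro!: AE_I2\<close>)
  then have "integrable lborel (\<lambda>x. \<delta> x * x)"
    using distributed_integrable[OF dist', of "\<lambda>x. x"] \<delta>_nonneg by simp
  have "(\<integral>\<omega>. X \<omega> \<partial>M) = (\<integral>x. \<delta> x * x \<partial>lborel)"
    using distributed_integral[OF dist', of "\<lambda>x. x"] \<delta>_nonneg by simp
  also have "\<dots> = integral UNIV (\<lambda>x. \<delta> x * x)"
    by (rule integral_lborel[symmetric]) fact
  also have "(\<lambda>x. \<delta> x * x) = (\<lambda>x. if x \<in> {a..b} then x * f x else 0)"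
    by (auto simp: \<delta>_def indicator_def)
  also have "integral UNIV \<dots> = integral {a..b} (\<lambda>x. x * f x)"
    by (rule integral_restrict_UNIV)
  finally show ?thesis .
qed

text \<open>Integration by parts: \<open>\<integral>\<^sub>a\<^sup>b t f(t) dt = b F(b) - a F(a) - \<integral>\<^sub>a\<^sup>b F\<close> with \<open>F(a) = 0\<close> and \<open>F(b) = 1\<close>.\<close>

lemma expectation_eq_minus_integral_CDF:
  fixes X :: "'a \<Rightarrow> real" and f :: "real \<Rightarrow> real"
  assumes "prob_space M" and "a \<le> b"
    and X: "X \<in> borel_measurable M" "\<forall>\<omega>\<in>space M. X \<omega> \<in> {a..b}"
    and dist: "distributed M lborel X (\<lambda>x. ennreal (indicator {a..b} x * f x))"
    and nonneg: "\<forall>t\<in>{a..b}. 0 \<le> f t"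
    and cont: "continuous_on {a..b} (CDF M X)" and CDF_a: "CDF M X a = 0"
    and deriv: "\<forall>x\<in>{a<..<b}. (CDF M X has_real_derivative f x) (at x)"
  shows "(\<integral>\<omega>. X \<omega> \<partial>M) = b - integral {a..b} (CDF M X)"
proof -
  have CDF_b: "CDF M X b = 1" using CDF_eq_1 assms(1) X(2) by auto
  have "((\<lambda>t. CDF M X t * 1) has_integral (CDF M X b * b - CDF M X a * a - (b - integral {a..b} (CDF M X)))) {a..b}"
    using integrable_continuous_real[OF cont] CDF_a CDF_b by (simp add: has_integral_integral)
  then have "((\<lambda>t. f t * t) has_integral (b - integral {a..b} (CDF M X))) {a..b}"
    using integration_by_parts_interior[OF bounded_bilinear_mult \<open>a \<le> b\<close> cont continuous_on_id,
        of f "\<lambda>_. 1"] deriv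
    by (simp add: has_real_derivative_iff_has_vector_derivative[symmetric])
  then show ?thesis
    using expectation_eq_integral_density[OF assms(1) X dist nonneg]
    by (simp add: integral_unique mult.commute)
qed

theorem corollary4p1:
  fixes M :: "'a measure" and X :: "'a \<Rightarrow> real" and f :: "real \<Rightarrow> real"
    and a b \<gamma> \<Gamma> :: real
  assumes "prob_space M"
    and "a < b"
    and "X \<in> borel_measurable M"
    and "\<forall>\<omega>\<in>space M. X \<omega> \<in> {a..b}"
    and "distributed M lborel X (\<lambda>x. ennreal (indicator {a..b} x * f x))"
    and "\<forall>t\<in>{a..b}. f t \<in> {0..1}"
    and "\<forall>x\<in>{a..b}. CDF M X x = integral {a..x} f"
    and "\<forall>x\<in>{a<..<b}. (CDF M X has_real_derivative f x) (at x)"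
    and "f integrable_on {a..b}"
    and "\<forall>t\<in>{a..b}. \<gamma> \<le> f t \<and> f t \<le> \<Gamma>"
  shows "\<bar>(CDF M X ((3*a+b)/4) + CDF M X ((a+3*b)/4)) / 2 - (b - (\<integral>\<omega>. X \<omega> \<partial>M)) / (b-a)\<bar>
           \<le> (b-a)/4 * (1/(b-a) - \<gamma>)
     \<and> \<bar>(CDF M X ((3*a+b)/4) + CDF M X ((a+3*b)/4)) / 2 - (b - (\<integral>\<omega>. X \<omega> \<partial>M)) / (b-a)\<bar>
           \<le> (b-a)/4 * (\<Gamma> - 1/(b-a))"
proof -
  define F where "F = CDF M X"
  define c d where "c = (3*a + b) / 4" and "d = (a + 3*b) / 4"
  have F_eq: "\<forall>x\<in>{a..b}. F x = integral {a..x} f" using assms(7) by (simp add: F_def)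
  have cont: "continuous_on {a..b} F"
    using continuous_on_cong[THEN iffD2, OF refl _ indefinite_integral_continuous_1[OF assms(9)]] F_eq
    by blast
  have slope: "\<gamma> * (y - x) \<le> F y - F x \<and> F y - F x \<le> \<Gamma> * (y - x)"
    if "a \<le> x" "x \<le> y" "y \<le> b" for x y
    using indefinite_integral_slope_bounds[OF assms(9,10) that] F_eq that by simp
  have F_a: "F a = 0" and F_b: "F b = 1"
    using F_eq CDF_eq_1[OF assms(1)] assms(2,4) by (auto simp: F_def)
  have "(\<integral>\<omega>. X \<omega> \<partial>M) = b - integral {a..b} F"
    unfolding F_def
    by (rule expectation_eq_minus_integral_CDF[OF assms(1) less_imp_le[OF assms(2)] assms(3,4,5)])
       (use assms(6,8) cont F_a in \<open>auto simp: F_def\<close>)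
  moreover define Q where "Q = (b - a) / 2 * (F c + F d) - integral {a..b} F"
  ultimately have lhs: "\<bar>(F c + F d) / 2 - (b - (\<integral>\<omega>. X \<omega> \<partial>M)) / (b - a)\<bar> = \<bar>Q\<bar> / (b - a)"
    using assms(2) by (simp add: Q_def abs_divide field_simps)
  have Q_bounds: "\<bar>Q\<bar> \<le> (b - a) / 4 * (1 - \<gamma> * (b - a))" "\<bar>Q\<bar> \<le> (b - a) / 4 * (\<Gamma> * (b - a) - 1)"
    using composite_midpoint_rule_error_slope_bounds[OF less_imp_le[OF assms(2)] cont slope]
    unfolding Q_def c_def d_def F_a F_b by simp_all
  have rhs: "(b - a) / 4 * (1 / (b - a) - \<gamma>) = (b - a) / 4 * (1 - \<gamma> * (b - a)) / (b - a)"
    "(b - a) / 4 * (\<Gamma> - 1 / (b - a)) = (b - a) / 4 * (\<Gamma> * (b - a) - 1) / (b - a)"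
    using assms(2) by (simp_all add: field_simps)
  from assms(2) have "0 \<le> b - a" by simp
  then show ?thesis
    unfolding F_def[symmetric] c_def[symmetric] d_def[symmetric] lhs rhs
    using divide_right_mono[OF Q_bounds(1)] divide_right_mono[OF Q_bounds(2)] by blast
qed

end
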